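(* Let $K,G:[0,\infty)\to\mathbb{R}$ be continuous, let $f$ solve $f''+Kf=0$ with $f>0$ on $(0,\infty)$ and $\int_1^\infty f(t)^{-2}dt<\infty$, and let $m$ solve $m''+Gm=0$ with $m(0)=f(0)$, $m'(0)=f'(0)$. Suppose the support of $G-K$ is contained in a bounded interval $[a,b]\subset[1,\infty)$. Set $$C(f,a,b):=\Big(\int_a^\infty f(t)^{-2}dt\Big)\cdot\|f^2|_{[a,b]}\|_2>0.$$ If $C(f,a,b)\,\|G-K\|_2<1$, then $$\alpha(m)\le\frac{C(f,a,b)\,\|G-K\|_2}{1-C(f,a,b)\,\|G-K\|_2}.$$
   Context: Notation: $\|G-K\|_2:=\sqrt{\int_0^\infty|G-K|^2dt}$; $\|f^2|_{[a,b]}\|_2:=\sqrt{\int_a^b f(t)^4dt}$; $\sigma(t):=m(t)/f(t)-1$ for $t>0$; $\alpha(m):=\sup_{t>0}|\sigma(t)|$. *)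

theory Defs
  imports "HOL-Analysis.Analysis"
begin

definition L2_diff :: "(real \<Rightarrow> real) \<Rightarrow> (real \<Rightarrow> real) \<Rightarrow> real" where
  "L2_diff G K = sqrt (integral {0..} (\<lambda>t. \<bar>G t - K t\<bar>^2))"

definition L2_sq_restr :: "(real \<Rightarrow> real) \<Rightarrow> real \<Rightarrow> real \<Rightarrow> real" where
  "L2_sq_restr f a b = sqrt (integral {a..b} (\<lambda>t. (f t)^4))"

definition Cfab :: "(real \<Rightarrow> real) \<Rightarrow> real \<Rightarrow> real \<Rightarrow> real" where
  "Cfab f a b = integral {a..} (\<lambda>t. 1 / (f t)^2) * L2_sq_restr f a b"

definition sigma :: "(real \<Rightarrow> real) \<Rightarrow> (real \<Rightarrow> real) \<Rightarrow> real \<Rightarrow> real" where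
  "sigma m f t = m t / f t - 1"

definition alpha :: "(real \<Rightarrow> real) \<Rightarrow> (real \<Rightarrow> real) \<Rightarrow> ereal" where
  "alpha m f = (SUP t\<in>{0<..}. ereal \<bar>sigma m f t\<bar>)"

end

theory Submission
  imports Defs
begin

text \<open>
  Proof of the perturbation bound for the equations f'' + K f = 0 and m'' + G m = 0.
  Let W = m' f - m f' be the Wronskian of the two solutions and sigma = m/f - 1.
  Since G = K outside [a,b] and the initial data agree, uniqueness for linear second
  order equations (an energy estimate of Gronwall type) gives m = f on [0,a], so
  W(a) = sigma(a) = 0.  From W' = -(G - K) f m and sigma' = W / f^2 we obtain
     W(s) = - integral over [a, min s b] of (G - K) f^2 (1 + sigma),
     sigma(u) = integral over [a, u] of W / f^2.
  If |sigma| <= S on [a,u], the Cauchy-Schwarz inequality bounds |W| by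
  (1 + S) ||G - K||_2 ||f^2|[a,b]||_2 and therefore |sigma(u)| by (1 + S) C with
  C = C(f,a,b) ||G - K||_2.  Taking for S the maximum of |sigma| on [a,T] yields
  S <= (1 + S) C, that is S <= C / (1 - C).
\<close>

section \<open>General facts about integrals\<close>

text \<open>An integral of a nonnegative function is nonnegative, integrable or not
  (a non-integrable function has integral 0 by convention).\<close>
lemma integral_nonneg_any:
  fixes g :: "'a::euclidean_space \<Rightarrow> real"
  assumes "\<And>x. x \<in> S \<Longrightarrow> 0 \<le> g x"
  shows "0 \<le> integral S g"
  by (metis assms integral_nonneg not_integrable_integral order_refl)

lemma L2_diff_nonneg: "0 \<le> L2_diff G K"
  unfolding L2_diff_def by (simp add: integral_nonneg_any)

lemma L2_sq_restr_nonneg: "0 \<le> L2_sq_restr f a b"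
  unfolding L2_sq_restr_def by (simp add: integral_nonneg_any)

lemma Cfab_nonneg: "0 \<le> Cfab f a b"
  unfolding Cfab_def by (simp add: integral_nonneg_any L2_sq_restr_nonneg)

lemma integral_on_support:
  fixes g :: "'a::euclidean_space \<Rightarrow> 'b::banach"
  assumes "T \<subseteq> S" and "\<And>x. x \<in> S \<Longrightarrow> x \<notin> T \<Longrightarrow> g x = 0"
  shows "integral S g = integral T g"
proof -
  have "integral S g = integral S (\<lambda>x. if x \<in> T then g x else 0)"
    by (rule integral_cong) (use assms in auto)
  also have "\<dots> = integral (T \<inter> S) g" by (rule integral_restrict_Int)
  finally show ?thesis using assms(1) by (simp add: Int_absorb2)
qed

lemma nonneg_integrable_on_subset:
  fixes g :: "'a::euclidean_space \<Rightarrow> real"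
  assumes "g integrable_on S" "\<And>x. x \<in> S \<Longrightarrow> 0 \<le> g x" "T \<in> sets lebesgue" "T \<subseteq> S"
  shows "g integrable_on T"
proof -
  have "g absolutely_integrable_on S"
    using assms(1,2) by (rule nonnegative_absolutely_integrable_1)
  hence "g absolutely_integrable_on T"
    using assms(3,4) by (rule set_integrable_subset)
  thus ?thesis using set_lebesgue_integral_eq_integral(1) by blast
qed

lemma nonneg_quadratic_discriminant:
  fixes A X B :: real
  assumes nonneg: "\<And>x. 0 \<le> A*x^2 + 2*X*x + B"
  shows "X^2 \<le> A*B"
proof (cases "A = 0")
  case True
  show ?thesis
  proof (rule ccontr)
    assume "\<not> ?thesis"
    then have "X \<noteq> 0" using True by simp
    have "0 \<le> A*(-(B+1)/(2*X))^2 + 2*X*(-(B+1)/(2*X)) + B" by (rule nonneg)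
    also have "\<dots> = -1" using True \<open>X \<noteq> 0\<close> by (simp add: field_simps)
    finally show False by simp
  qed
next
  case False
  have "A \<ge> 0"
  proof (rule ccontr)
    assume "\<not> A \<ge> 0"
    hence A_neg: "A < 0" by simp
    define x where "x = sqrt ((\<bar>B\<bar> + 1) / (- A))"
    have x2: "x^2 = (\<bar>B\<bar> + 1) / (- A)" unfolding x_def using A_neg by (simp add: divide_nonneg_neg)
    have "0 \<le> A*x^2 + 2*X*x + B" "0 \<le> A*(-x)^2 + 2*X*(-x) + B" by (rule nonneg)+
    hence "0 \<le> A*x^2 + B" by simp
    also have "A*x^2 = -(\<bar>B\<bar> + 1)" using x2 A_neg by simp
    finally show False by simp
  qed
  hence A_pos: "A > 0" using False by simp
  have "0 \<le> A*(-X/A)^2 + 2*X*(-X/A) + B" by (rule nonneg)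
  also have "\<dots> = B - X^2/A" using A_pos by (simp add: field_simps power2_eq_square)
  finally have "X^2/A \<le> B" by simp
  thus ?thesis using A_pos by (simp add: field_simps)
qed

text \<open>Cauchy-Schwarz inequality for integrals of continuous functions on a compact
  interval: the integral of (x p + q)^2 is a nonnegative quadratic in x.\<close>
lemma cauchy_schwarz_integral:
  fixes p q :: "real \<Rightarrow> real"
  assumes cp: "continuous_on {c..d} p" and cq: "continuous_on {c..d} q"
  shows "integral {c..d} (\<lambda>t. p t * q t)
     \<le> sqrt (integral {c..d} (\<lambda>t. (p t)^2)) * sqrt (integral {c..d} (\<lambda>t. (q t)^2))"
proof -
  define A where "A = integral {c..d} (\<lambda>t. (p t)^2)"
  define B where "B = integral {c..d} (\<lambda>t. (q t)^2)"
  define X where "X = integral {c..d} (\<lambda>t. p t * q t)"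
  have "0 \<le> A*x^2 + 2*X*x + B" for x
  proof -
    have expand: "(x * p t + q t)^2 = x^2 * (p t)^2 + (2*x) * (p t * q t) + (q t)^2" for t
      by (simp add: power2_eq_square algebra_simps)
    have "0 \<le> integral {c..d} (\<lambda>t. (x * p t + q t)^2)"
      by (simp add: integral_nonneg_any)
    also have "\<dots> = x^2 * A + (2*x) * X + B"
      unfolding expand A_def B_def X_def
      by (subst integral_add integral_mult_right;
          (intro integrable_continuous_interval continuous_intros cp cq)?)+ simp
    finally show ?thesis by (simp add: algebra_simps)
  qed
  hence "X^2 \<le> A*B" by (rule nonneg_quadratic_discriminant)
  hence "\<bar>X\<bar> \<le> sqrt (A*B)" using real_sqrt_le_mono[of "X^2" "A*B"] by simp
  thus ?thesis unfolding A_def B_def X_def by (simp add: real_sqrt_mult)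
qed

lemma cauchy_schwarz_integral_initial:
  fixes p q :: "real \<Rightarrow> real"
  assumes "c \<le> s" "s \<le> d" and cp: "continuous_on {c..d} p" and cq: "continuous_on {c..d} q"
  shows "integral {c..s} (\<lambda>t. p t * q t)
     \<le> sqrt (integral {c..d} (\<lambda>t. (p t)^2)) * sqrt (integral {c..d} (\<lambda>t. (q t)^2))"
proof -
  have sub: "{c..s} \<subseteq> {c..d}" using assms by auto
  have square_mono: "integral {c..s} (\<lambda>t. (h t)^2) \<le> integral {c..d} (\<lambda>t. (h t)^2)"
    if ch: "continuous_on {c..d} h" for h :: "real \<Rightarrow> real"
    by (rule integral_subset_le[OF sub])
       (auto intro!: integrable_continuous_interval continuous_intros ch continuous_on_subset[OF ch sub])
  have "integral {c..s} (\<lambda>t. p t * q t)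
     \<le> sqrt (integral {c..s} (\<lambda>t. (p t)^2)) * sqrt (integral {c..s} (\<lambda>t. (q t)^2))"
    by (rule cauchy_schwarz_integral; rule continuous_on_subset[OF _ sub]) (fact cp cq)+
  also have "\<dots> \<le> sqrt (integral {c..d} (\<lambda>t. (p t)^2)) * sqrt (integral {c..d} (\<lambda>t. (q t)^2))"
    by (intro mult_mono real_sqrt_le_mono square_mono cp cq) (simp_all add: integral_nonneg_any)
  finally show ?thesis .
qed

section \<open>Uniqueness for the linear second order equation\<close>

text \<open>Pointwise growth bound for the energy y^2 + z^2 along y' = z, z' = -k y.\<close>
lemma energy_growth:
  fixes y z k B :: real
  assumes "\<bar>k\<bar> \<le> B"
  shows "2 * y * z + 2 * z * (- k * y) \<le> (1 + \<bar>B\<bar>) * (y^2 + z^2)"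
proof -
  have "2 * y * z + 2 * z * (- k * y) = 2 * (y * z) * (1 - k)" by (simp add: algebra_simps)
  also have "\<dots> \<le> \<bar>2 * (y * z)\<bar> * \<bar>1 - k\<bar>" by (metis abs_ge_self abs_mult)
  also have "\<dots> \<le> (y^2 + z^2) * (1 + \<bar>B\<bar>)"
  proof (rule mult_mono)
    have "0 \<le> (\<bar>y\<bar> - \<bar>z\<bar>)^2" by simp
    thus "\<bar>2 * (y * z)\<bar> \<le> y^2 + z^2" by (simp add: power2_diff abs_mult power2_abs)
    show "\<bar>1 - k\<bar> \<le> 1 + \<bar>B\<bar>" using assms by linarith
  qed auto
  finally show ?thesis by (simp add: mult.commute)
qed

text \<open>The
  second derivative w only has to agree with -K y on [0,a); the proof shows that the
  weighted energy (y^2 + z^2) exp(-L t) is nonincreasing.\<close>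
lemma linear_ode_zero_data:
  fixes y z w K :: "real \<Rightarrow> real"
  assumes cK: "continuous_on {0..a} K"
    and dy: "\<And>t. t \<in> {0..a} \<Longrightarrow> (y has_real_derivative z t) (at t within {0..a})"
    and dz: "\<And>t. t \<in> {0..a} \<Longrightarrow> (z has_real_derivative w t) (at t within {0..a})"
    and wK: "\<And>t. 0 \<le> t \<Longrightarrow> t < a \<Longrightarrow> w t = - K t * y t"
    and y0: "y 0 = 0" and z0: "z 0 = 0"
    and t: "t \<in> {0..a}"
  shows "y t = 0 \<and> z t = 0"
proof -
  obtain B where B: "\<And>s. s \<in> {0..a} \<Longrightarrow> \<bar>K s\<bar> \<le> B"
    using compact_imp_bounded[OF compact_continuous_image[OF cK compact_Icc]]
    unfolding bounded_iff real_norm_def by (metis imageI)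
  define L where "L = 1 + \<bar>B\<bar>"
  define E where "E s = ((y s)^2 + (z s)^2) * exp (- L * s)" for s
  have cE: "continuous_on {0..t} E"
    unfolding E_def using t
    by (intro continuous_intros continuous_on_subset[OF DERIV_continuous_on[OF dy]]
        continuous_on_subset[OF DERIV_continuous_on[OF dz]]) auto
  have "E t \<le> E 0"
  proof (rule DERIV_nonpos_imp_decreasing_open[OF _ _ cE])
    show "0 \<le> t" using t by simp
    fix s assume s: "0 < s" "s < t"
    have s_int: "s \<in> interior {0..a}" using s t by simp
    have "(y has_real_derivative z s) (at s)" "(z has_real_derivative w s) (at s)"
      using dy[of s] dz[of s] s t at_within_interior[OF s_int] by auto
    hence "(E has_real_derivative
       ((2 * y s * z s + 2 * z s * w s) - L * ((y s)^2 + (z s)^2)) * exp (- L * s)) (at s)"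
      unfolding E_def by (auto intro!: derivative_eq_intros simp: algebra_simps)
    moreover have "2 * y s * z s + 2 * z s * w s \<le> L * ((y s)^2 + (z s)^2)"
      using energy_growth[OF B[of s]] wK[of s] s t unfolding L_def by auto
    ultimately show "\<exists>d. (E has_real_derivative d) (at s) \<and> d \<le> 0"
      by (auto simp: mult_nonpos_nonneg)
  qed
  hence "(y t)^2 + (z t)^2 \<le> 0" unfolding E_def using y0 z0 by (simp add: mult_le_0_iff)
  thus ?thesis by (simp add: sum_power2_le_zero_iff)
qed

section \<open>The perturbed equation\<close>

locale perturbed_equation =
  fixes K G f f' m m' :: "real \<Rightarrow> real" and a b :: real
  assumes contK: "continuous_on {0..} K"
    and contG: "continuous_on {0..} G"
    and f_d1: "\<And>t. t \<ge> 0 \<Longrightarrow> (f has_real_derivative f' t) (at t within {0..})"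
    and f_d2: "\<And>t. t \<ge> 0 \<Longrightarrow> (f' has_real_derivative (- K t * f t)) (at t within {0..})"
    and f_pos: "\<And>t. t > 0 \<Longrightarrow> f t > 0"
    and m_d1: "\<And>t. t \<ge> 0 \<Longrightarrow> (m has_real_derivative m' t) (at t within {0..})"
    and m_d2: "\<And>t. t \<ge> 0 \<Longrightarrow> (m' has_real_derivative (- G t * m t)) (at t within {0..})"
    and m0: "m 0 = f 0" and m'0: "m' 0 = f' 0"
    and a_ge_1: "1 \<le> a" and a_le_b: "a \<le> b"
    and supp: "closure {t \<in> {0..}. G t \<noteq> K t} \<subseteq> {a..b}"
begin

lemma a_pos: "0 < a"
  using a_ge_1 by simp

lemma f_cont: "continuous_on {0..} f"
  using f_d1 by (auto intro!: DERIV_continuous_on)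

lemma m_cont: "continuous_on {0..} m"
  using m_d1 by (auto intro!: DERIV_continuous_on)

lemma coefficients_agree:
  assumes "0 \<le> t" "t \<notin> {a..b}" shows "G t = K t"
proof (rule ccontr)
  assume "G t \<noteq> K t"
  hence "t \<in> closure {t \<in> {0..}. G t \<noteq> K t}" using assms(1) closure_subset by fastforce
  thus False using supp assms(2) by blast
qed

text \<open>Before the support of G - K both equations coincide, so m = f on [0,a].\<close>
lemma solutions_agree: "t \<in> {0..a} \<Longrightarrow> m t = f t \<and> m' t = f' t"
proof -
  assume t: "t \<in> {0..a}"
  have "(\<lambda>t. m t - f t) t = 0 \<and> (\<lambda>t. m' t - f' t) t = 0"
  proof (rule linear_ode_zero_data[where K=K and y="\<lambda>t. m t - f t" and z="\<lambda>t. m' t - f' t"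
        and w="\<lambda>t. - G t * m t - (- K t * f t)"])
    show "continuous_on {0..a} K" by (rule continuous_on_subset[OF contK]) auto
    show "((\<lambda>t. m t - f t) has_real_derivative m' s - f' s) (at s within {0..a})"
      if "s \<in> {0..a}" for s
      using that by (intro DERIV_diff has_field_derivative_subset[OF m_d1]
          has_field_derivative_subset[OF f_d1]) auto
    show "((\<lambda>t. m' t - f' t) has_real_derivative - G s * m s - (- K s * f s)) (at s within {0..a})"
      if "s \<in> {0..a}" for s
      using that by (intro DERIV_diff has_field_derivative_subset[OF m_d2]
          has_field_derivative_subset[OF f_d2]) auto
    show "- G s * m s - (- K s * f s) = - K s * (m s - f s)" if "0 \<le> s" "s < a" for s
      using coefficients_agree[of s] that by (simp add: algebra_simps)
  qed (use m0 m'0 t in auto)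
  thus ?thesis by simp
qed

definition wronskian :: "real \<Rightarrow> real" where
  "wronskian t = m' t * f t - m t * f' t"

lemma wronskian_deriv:
  assumes t: "t \<ge> 0"
  shows "(wronskian has_real_derivative (-(G t - K t) * f t * m t)) (at t within {0..})"
  unfolding wronskian_def
  by (rule derivative_eq_intros m_d1[OF t] m_d2[OF t] f_d1[OF t] f_d2[OF t] refl
      | simp add: algebra_simps)+

lemma wronskian_cont: "continuous_on {0..} wronskian"
  using wronskian_deriv by (auto intro!: DERIV_continuous_on)

lemma wronskian_at_a: "wronskian a = 0"
  using solutions_agree[of a] a_pos unfolding wronskian_def by simp

lemma wronskian_const_after_b:
  assumes s: "b \<le> s" shows "wronskian s = wronskian b"
proof -
  have cont: "continuous_on {b..s} wronskian"
    by (rule continuous_on_subset[OF wronskian_cont]) (use a_pos a_le_b in auto)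
  have zero_deriv: "(wronskian has_real_derivative 0) (at x)" if "b < x" "x < s" for x
  proof -
    have "x \<in> interior {0..}" using that a_pos a_le_b by simp
    hence "(wronskian has_real_derivative (-(G x - K x) * f x * m x)) (at x)"
      using wronskian_deriv[of x] at_within_interior by fastforce
    thus ?thesis using coefficients_agree[of x] that a_pos a_le_b by simp
  qed
  have "wronskian b \<le> wronskian s"
    by (rule DERIV_nonneg_imp_increasing_open[OF s _ cont]) (use zero_deriv in auto)
  moreover have "wronskian s \<le> wronskian b"
    by (rule DERIV_nonpos_imp_decreasing_open[OF s _ cont]) (use zero_deriv in auto)
  ultimately show ?thesis by simp
qed

lemma wronskian_integral:
  assumes s: "a \<le> s"
  shows "wronskian s = integral {a..min s b} (\<lambda>t. -(G t - K t) * f t * m t)"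
proof -
  have "a \<le> min s b" using s a_le_b by simp
  hence "((\<lambda>t. -(G t - K t) * f t * m t) has_integral
      (wronskian (min s b) - wronskian a)) {a..min s b}"
  proof (rule fundamental_theorem_of_calculus)
    fix x assume "x \<in> {a..min s b}"
    hence "x \<ge> 0" "{a..min s b} \<subseteq> {0..}" using a_pos by auto
    thus "(wronskian has_vector_derivative -(G x - K x) * f x * m x) (at x within {a..min s b})"
      unfolding has_real_derivative_iff_has_vector_derivative[symmetric]
      by (rule has_field_derivative_subset[OF wronskian_deriv])
  qed
  moreover have "wronskian s = wronskian (min s b)"
    using wronskian_const_after_b[of s] by (cases "s \<le> b") auto
  ultimately show ?thesis using wronskian_at_a by (simp add: integral_unique)
qed

lemma sigma_deriv:
  assumes t: "t > 0"
  shows "(sigma m f has_real_derivative wronskian t / (f t)^2) (at t within {0..})"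
proof -
  have "t \<ge> 0" "f t \<noteq> 0" using t f_pos[OF t] by auto
  hence "((\<lambda>t. m t / f t - 1) has_real_derivative
      ((m' t * f t - m t * f' t) / (f t * f t) - 0)) (at t within {0..})"
    by (intro DERIV_diff DERIV_divide m_d1 f_d1 DERIV_const) auto
  moreover have "sigma m f = (\<lambda>t. m t / f t - 1)" by (rule ext) (simp add: sigma_def)
  ultimately show ?thesis by (simp add: wronskian_def power2_eq_square)
qed

lemma sigma_vanishes_before_a: "0 < t \<Longrightarrow> t \<le> a \<Longrightarrow> sigma m f t = 0"
  using solutions_agree[of t] f_pos[of t] unfolding sigma_def by simp

lemma sigma_integral:
  assumes t: "a \<le> t"
  shows "sigma m f t = integral {a..t} (\<lambda>s. wronskian s / (f s)^2)"
proof -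
  have "((\<lambda>s. wronskian s / (f s)^2) has_integral (sigma m f t - sigma m f a)) {a..t}"
  proof (rule fundamental_theorem_of_calculus[OF t])
    fix x assume "x \<in> {a..t}"
    hence "x > 0" "{a..t} \<subseteq> {0..}" using a_pos by auto
    thus "(sigma m f has_vector_derivative wronskian x / (f x)^2) (at x within {a..t})"
      unfolding has_real_derivative_iff_has_vector_derivative[symmetric]
      by (rule has_field_derivative_subset[OF sigma_deriv])
  qed
  thus ?thesis using sigma_vanishes_before_a[OF a_pos] by (simp add: integral_unique)
qed

lemma sigma_cont: "continuous_on {0<..} (sigma m f)"
proof (rule DERIV_continuous_on)
  fix t :: real assume "t \<in> {0<..}"
  thus "(sigma m f has_real_derivative wronskian t / (f t)^2) (at t within {0<..})"
    by (intro has_field_derivative_subset[OF sigma_deriv]) auto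
qed

lemma L2_diff_support: "L2_diff G K = sqrt (integral {a..b} (\<lambda>t. \<bar>G t - K t\<bar>^2))"
proof -
  have "integral {0..} (\<lambda>t. \<bar>G t - K t\<bar>^2) = integral {a..b} (\<lambda>t. \<bar>G t - K t\<bar>^2)"
    by (rule integral_on_support) (use a_pos coefficients_agree in auto)
  thus ?thesis unfolding L2_diff_def by simp
qed

text \<open>A bound S for |sigma| on [a,s] bounds the Wronskian at s: since m = f (1 + sigma),
  the integrand of the Wronskian is at most (1 + S) |G - K| f^2, to which the
  Cauchy-Schwarz inequality applies.\<close>
lemma wronskian_bound:
  assumes s: "a \<le> s" and S: "\<And>u. u \<in> {a..s} \<Longrightarrow> \<bar>sigma m f u\<bar> \<le> S"
  shows "\<bar>wronskian s\<bar> \<le> (1 + S) * (L2_diff G K * L2_sq_restr f a b)"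
proof -
  define s' where "s' = min s b"
  have s': "a \<le> s'" "s' \<le> b" "{a..s'} \<subseteq> {a..s}" using s a_le_b by (auto simp: s'_def)
  have on_ab: "continuous_on {a..b} h" if "continuous_on {0..} h" for h :: "real \<Rightarrow> real"
    by (rule continuous_on_subset[OF that]) (use a_pos in auto)
  have on_as': "continuous_on {a..s'} h" if "continuous_on {0..} h" for h :: "real \<Rightarrow> real"
    by (rule continuous_on_subset[OF on_ab[OF that]]) (use s' in auto)
  have pointwise: "norm (-(G t - K t) * f t * m t) \<le> (1 + S) * (\<bar>G t - K t\<bar> * (f t)^2)"
    if t: "t \<in> {a..s'}" for t
  proof -
    have ft: "f t > 0" using t a_pos f_pos by simp
    have "m t = f t * (1 + sigma m f t)" using ft by (simp add: sigma_def field_simps)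
    hence "norm (-(G t - K t) * f t * m t) = (\<bar>G t - K t\<bar> * (f t)^2) * \<bar>1 + sigma m f t\<bar>"
      using ft by (simp add: abs_mult power2_eq_square mult_ac abs_minus_commute)
    also have "\<dots> \<le> (\<bar>G t - K t\<bar> * (f t)^2) * (1 + S)"
      using S[of t] t s' by (intro mult_left_mono) auto
    finally show ?thesis by (simp add: mult.commute)
  qed
  have "\<bar>wronskian s\<bar> = norm (integral {a..s'} (\<lambda>t. -(G t - K t) * f t * m t))"
    using wronskian_integral[OF s] by (simp add: s'_def)
  also have "\<dots> \<le> integral {a..s'} (\<lambda>t. (1 + S) * (\<bar>G t - K t\<bar> * (f t)^2))"
    by (rule integral_norm_bound_integral[OF _ _ pointwise])
       (intro integrable_continuous_interval continuous_intros on_as' contG contK f_cont m_cont)+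
  also have "\<dots> = (1 + S) * integral {a..s'} (\<lambda>t. \<bar>G t - K t\<bar> * (f t)^2)"
    by (rule integral_mult_right)
  also have "\<dots> \<le> (1 + S) * (L2_diff G K * L2_sq_restr f a b)"
  proof (rule mult_left_mono)
    have "integral {a..s'} (\<lambda>t. \<bar>G t - K t\<bar> * (f t)^2)
        \<le> sqrt (integral {a..b} (\<lambda>t. \<bar>G t - K t\<bar>^2)) * sqrt (integral {a..b} (\<lambda>t. ((f t)^2)^2))"
      by (rule cauchy_schwarz_integral_initial[OF s'(1,2)])
         (intro continuous_intros on_ab contG contK f_cont)+
    thus "integral {a..s'} (\<lambda>t. \<bar>G t - K t\<bar> * (f t)^2) \<le> L2_diff G K * L2_sq_restr f a b"
      by (simp add: L2_diff_support L2_sq_restr_def)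
    show "0 \<le> 1 + S" using S[of s] s abs_ge_zero[of "sigma m f s"] by simp
  qed
  finally show ?thesis .
qed

text \<open>The a-priori estimate: a bound S for |sigma| on [a,u] implies the bound
  (1 + S) C(f,a,b) ||G - K||_2 at u, by integrating sigma' = W / f^2 from a.\<close>
lemma sigma_bound:
  assumes f_int: "(\<lambda>t. 1 / (f t)^2) integrable_on {1..}"
    and u: "a \<le> u" and S: "\<And>v. v \<in> {a..u} \<Longrightarrow> \<bar>sigma m f v\<bar> \<le> S"
  shows "\<bar>sigma m f u\<bar> \<le> (1 + S) * (Cfab f a b * L2_diff G K)"
proof -
  define M where "M = (1 + S) * (L2_diff G K * L2_sq_restr f a b)"
  have M_nonneg: "0 \<le> M"
    using S[of u] u by (auto simp: M_def L2_diff_nonneg L2_sq_restr_nonneg intro!: mult_nonneg_nonneg)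
  have f_int_a: "(\<lambda>t. 1 / (f t)^2) integrable_on {a..}"
    by (rule nonneg_integrable_on_subset[OF f_int]) (use a_ge_1 in auto)
  have f_nz: "f x \<noteq> 0" if "x \<in> {a..u}" for x
    using that a_pos f_pos[of x] by simp
  have cont: "continuous_on {a..u} h" if "continuous_on {0..} h" for h :: "real \<Rightarrow> real"
    by (rule continuous_on_subset[OF that]) (use a_pos in auto)
  have "\<bar>sigma m f u\<bar> = norm (integral {a..u} (\<lambda>x. wronskian x / (f x)^2))"
    using sigma_integral[OF u] by simp
  also have "\<dots> \<le> integral {a..u} (\<lambda>x. M * (1 / (f x)^2))"
  proof (rule integral_norm_bound_integral)
    show "(\<lambda>x. wronskian x / (f x)^2) integrable_on {a..u}"
      by (intro integrable_continuous_interval continuous_intros cont wronskian_cont f_cont)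
         (use f_nz in auto)
    show "(\<lambda>x. M * (1 / (f x)^2)) integrable_on {a..u}"
      by (intro integrable_continuous_interval continuous_intros cont f_cont) (use f_nz in auto)
    fix x assume x: "x \<in> {a..u}"
    have "\<bar>wronskian x\<bar> \<le> M" unfolding M_def using x by (intro wronskian_bound S) auto
    thus "norm (wronskian x / (f x)^2) \<le> M * (1 / (f x)^2)"
      by (simp add: abs_div divide_right_mono)
  qed
  also have "\<dots> = M * integral {a..u} (\<lambda>x. 1 / (f x)^2)"
    by (rule integral_mult_right)
  also have "\<dots> \<le> M * integral {a..} (\<lambda>x. 1 / (f x)^2)"
    by (intro mult_left_mono[OF _ M_nonneg] integral_subset_le f_int_a
        integrable_continuous_interval continuous_intros cont f_cont) (use f_nz in auto)
  also have "\<dots> = (1 + S) * (Cfab f a b * L2_diff G K)"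
    by (simp add: M_def Cfab_def mult_ac)
  finally show ?thesis .
qed

text \<open>Applying the a-priori estimate with S the maximum of |sigma| on [a,t] gives
  S \<le> (1 + S) C, hence S \<le> C / (1 - C) when C < 1.\<close>
lemma sigma_uniform_bound:
  assumes f_int: "(\<lambda>t. 1 / (f t)^2) integrable_on {1..}"
    and small: "Cfab f a b * L2_diff G K < 1" and t: "0 < t"
  shows "\<bar>sigma m f t\<bar> \<le> Cfab f a b * L2_diff G K / (1 - Cfab f a b * L2_diff G K)"
proof (cases "t \<le> a")
  case True
  thus ?thesis using sigma_vanishes_before_a[OF t] small
    by (simp add: Cfab_nonneg L2_diff_nonneg)
next
  case False
  have cont: "continuous_on {a..t} (\<lambda>s. \<bar>sigma m f s\<bar>)"
    by (intro continuous_intros continuous_on_subset[OF sigma_cont]) (use a_pos in auto)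
  obtain t0 where t0: "t0 \<in> {a..t}" and max: "\<And>s. s \<in> {a..t} \<Longrightarrow> \<bar>sigma m f s\<bar> \<le> \<bar>sigma m f t0\<bar>"
    using continuous_attains_sup[OF _ _ cont] False by auto
  define S where "S = \<bar>sigma m f t0\<bar>"
  have "S \<le> (1 + S) * (Cfab f a b * L2_diff G K)"
    unfolding S_def by (rule sigma_bound[OF f_int]) (use t0 max in auto)
  hence "S \<le> Cfab f a b * L2_diff G K / (1 - Cfab f a b * L2_diff G K)"
    using small by (simp add: field_simps)
  thus ?thesis using max[of t] False unfolding S_def by simp
qed

end

theorem lemma2p3:
  fixes K G f f' m m' :: "real \<Rightarrow> real" and a b :: real
  assumes contK: "continuous_on {0..} K"
    and contG: "continuous_on {0..} G"
    and f_d1: "\<And>t. t \<ge> 0 \<Longrightarrow> (f has_real_derivative f' t) (at t within {0..})"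
    and f_d2: "\<And>t. t \<ge> 0 \<Longrightarrow> (f' has_real_derivative (- K t * f t)) (at t within {0..})"
    and f_pos: "\<And>t. t > 0 \<Longrightarrow> f t > 0"
    and f_int: "(\<lambda>t. 1 / (f t)^2) integrable_on {1..}"
    and m_d1: "\<And>t. t \<ge> 0 \<Longrightarrow> (m has_real_derivative m' t) (at t within {0..})"
    and m_d2: "\<And>t. t \<ge> 0 \<Longrightarrow> (m' has_real_derivative (- G t * m t)) (at t within {0..})"
    and m0: "m 0 = f 0" and m'0: "m' 0 = f' 0"
    and ab: "1 \<le> a" "a \<le> b"
    and supp: "closure {t \<in> {0..}. G t \<noteq> K t} \<subseteq> {a..b}"
    and small: "Cfab f a b * L2_diff G K < 1"
  shows "alpha m f \<le> ereal (Cfab f a b * L2_diff G K / (1 - Cfab f a b * L2_diff G K))"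
proof -
  interpret perturbed_equation K G f f' m m' a b
    by unfold_locales (fact assms)+
  have "\<bar>sigma m f t\<bar> \<le> Cfab f a b * L2_diff G K / (1 - Cfab f a b * L2_diff G K)"
    if "t \<in> {0<..}" for t
    using sigma_uniform_bound[OF f_int small] that by simp
  thus ?thesis unfolding alpha_def by (intro SUP_least) simp
qed

end
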